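(* Let $G$ be a $(P_5,\text{chair})$-free graph and let $C=v_1v_2v_3v_4v_5v_1$ be an induced $C_5$ in $G$. Then for every $1\le i\le 5$, every vertex in $S_4(i)\cup S_5$ is either complete or anticomplete to each connected component of $G[S^2_3(i)]$.
   Context: All graphs are finite and simple; $P_5$ is the path on 5 vertices; the chair is a $P_4$ plus a vertex adjacent to exactly one of the two middle vertices of the $P_4$; "$H$-free" means no induced subgraph isomorphic to $H$. Indices modulo 5; for $v\notin V(C)$ let $N_C(v)=N(v)\cap V(C)$. $S^2_3(i)=\{v\notin V(C): N_C(v)=\{v_{i-2},v_i,v_{i+2}\}\}$, $S_4(i)=\{v\notin V(C): N_C(v)=\{v_{i-2},v_{i-1},v_{i+1},v_{i+2}\}\}$, $S_5=\{v\notin V(C): N_C(v)=V(C)\}$. A vertex is complete (anticomplete) to a set if it is adjacent (nonadjacent) to every vertex of the set. *)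

theory Defs
  imports Main
begin

definition simple_graph :: "'a set \<Rightarrow> ('a \<Rightarrow> 'a \<Rightarrow> bool) \<Rightarrow> bool" where
  "simple_graph V E \<longleftrightarrow> finite V \<and> (\<forall>x y. E x y \<longrightarrow> x \<in> V \<and> y \<in> V)
     \<and> (\<forall>x y. E x y \<longrightarrow> E y x) \<and> (\<forall>x. \<not> E x x)"

definition has_induced :: "'a set \<Rightarrow> ('a \<Rightarrow> 'a \<Rightarrow> bool) \<Rightarrow> nat \<Rightarrow> (nat \<Rightarrow> nat \<Rightarrow> bool) \<Rightarrow> bool" where
  "has_induced V E k F \<longleftrightarrow> (\<exists>f. inj_on f {0..<k} \<and> f ` {0..<k} \<subseteq> V \<and>
      (\<forall>i<k. \<forall>j<k. E (f i) (f j) \<longleftrightarrow> F i j))"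

definition P5_adj :: "nat \<Rightarrow> nat \<Rightarrow> bool" where
  "P5_adj i j \<longleftrightarrow> i = j + 1 \<or> j = i + 1"

definition chair_adj :: "nat \<Rightarrow> nat \<Rightarrow> bool" where
  "chair_adj i j \<longleftrightarrow> (i < 4 \<and> j < 4 \<and> (i = j + 1 \<or> j = i + 1)) \<or> {i, j} = {1, 4}"

definition induced_C5 :: "'a set \<Rightarrow> ('a \<Rightarrow> 'a \<Rightarrow> bool) \<Rightarrow> (nat \<Rightarrow> 'a) \<Rightarrow> bool" where
  "induced_C5 V E v \<longleftrightarrow> inj_on v {0..<5} \<and> v ` {0..<5} \<subseteq> V \<and>
     (\<forall>i<5. \<forall>j<5. E (v i) (v j) \<longleftrightarrow> (j = (i + 1) mod 5 \<or> i = (j + 1) mod 5))"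

definition cv :: "(nat \<Rightarrow> 'a) \<Rightarrow> nat \<Rightarrow> 'a" where
  "cv v i = v (i mod 5)"

definition cyc_set :: "(nat \<Rightarrow> 'a) \<Rightarrow> 'a set" where
  "cyc_set v = v ` {0..<5}"

definition N_C :: "('a \<Rightarrow> 'a \<Rightarrow> bool) \<Rightarrow> (nat \<Rightarrow> 'a) \<Rightarrow> 'a \<Rightarrow> 'a set" where
  "N_C E v u = {x \<in> cyc_set v. E u x}"

text \<open>Indices: i-2 = i+3, i-1 = i+4 (mod 5).\<close>
definition S23 :: "'a set \<Rightarrow> ('a \<Rightarrow> 'a \<Rightarrow> bool) \<Rightarrow> (nat \<Rightarrow> 'a) \<Rightarrow> nat \<Rightarrow> 'a set" where
  "S23 V E v i = {u \<in> V - cyc_set v. N_C E v u = {cv v (i + 3), cv v i, cv v (i + 2)}}"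

definition S4 :: "'a set \<Rightarrow> ('a \<Rightarrow> 'a \<Rightarrow> bool) \<Rightarrow> (nat \<Rightarrow> 'a) \<Rightarrow> nat \<Rightarrow> 'a set" where
  "S4 V E v i = {u \<in> V - cyc_set v.
      N_C E v u = {cv v (i + 3), cv v (i + 4), cv v (i + 1), cv v (i + 2)}}"

definition S5 :: "'a set \<Rightarrow> ('a \<Rightarrow> 'a \<Rightarrow> bool) \<Rightarrow> (nat \<Rightarrow> 'a) \<Rightarrow> 'a set" where
  "S5 V E v = {u \<in> V - cyc_set v. N_C E v u = cyc_set v}"

definition components_in :: "('a \<Rightarrow> 'a \<Rightarrow> bool) \<Rightarrow> 'a set \<Rightarrow> 'a set set" where
  "components_in E S = {{y. (\<lambda>a b. a \<in> S \<and> b \<in> S \<and> E a b)\<^sup>*\<^sup>* x y} | x. x \<in> S}"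

definition complete_to :: "('a \<Rightarrow> 'a \<Rightarrow> bool) \<Rightarrow> 'a \<Rightarrow> 'a set \<Rightarrow> bool" where
  "complete_to E u K \<longleftrightarrow> (\<forall>y\<in>K. E u y)"

definition anticomplete_to :: "('a \<Rightarrow> 'a \<Rightarrow> bool) \<Rightarrow> 'a \<Rightarrow> 'a set \<Rightarrow> bool" where
  "anticomplete_to E u K \<longleftrightarrow> (\<forall>y\<in>K. \<not> E u y)"

end

theory Submission
  imports Defs "HOL-Number_Theory.Cong"
begin

text \<open>Let \<open>u \<in> S\<^sub>4(i) \<union> S\<^sub>5\<close>; then \<open>u\<close> is adjacent to the two nonadjacent cycle vertices
  \<open>v\<^sub>i\<^sub>+\<^sub>1\<close> and \<open>v\<^sub>i\<^sub>-\<^sub>1\<close>, while no vertex of \<open>S\<^sup>2\<^sub>3(i)\<close> sees either of them. If \<open>u\<close> were adjacent to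
  exactly one end \<open>x\<close> of an edge \<open>xy\<close> of \<open>G[S\<^sup>2\<^sub>3(i)]\<close>, then \<open>v\<^sub>i\<^sub>+\<^sub>1\<close>-\<open>u\<close>-\<open>x\<close>-\<open>y\<close> together
  with \<open>v\<^sub>i\<^sub>-\<^sub>1\<close> would be an induced chair. So adjacency to \<open>u\<close> is constant along edges,
  hence on components.\<close>

lemma all_less_5_iff: "(\<forall>i<5::nat. P i) \<longleftrightarrow> P 0 \<and> P 1 \<and> P 2 \<and> P 3 \<and> P 4"
  by (auto simp: less_Suc_eq numeral_eq_Suc)

lemma induced_chairI:
  assumes sg: "simple_graph V E"
    and in_V: "a \<in> V" "b \<in> V" "u \<in> V" "x \<in> V" "y \<in> V"
    and "a \<noteq> b" "\<not> E a b" "E u a" "E u b"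
    and "\<not> E x a" "\<not> E x b" "\<not> E y a" "\<not> E y b"
    and "E u x" "E x y" "\<not> E u y"
  shows "has_induced V E 5 chair_adj"
proof -
  have sym: "\<And>p q. E p q \<Longrightarrow> E q p" and irr: "\<And>p. \<not> E p p"
    using sg unfolding simple_graph_def by blast+
  have distinct: "a \<noteq> u" "a \<noteq> x" "a \<noteq> y" "b \<noteq> u" "b \<noteq> x" "b \<noteq> y" "u \<noteq> x" "u \<noteq> y" "x \<noteq> y"
    using assms sym irr by metis+
  have five: "{0..<5::nat} = {0,1,2,3,4}" by auto
  define f where "f = (!) [a, u, x, y, b]"
  show ?thesis
    unfolding has_induced_def
  proof (intro exI conjI)
    show "inj_on f {0..<5}" unfolding five f_def inj_on_def using distinct \<open>a \<noteq> b\<close> by auto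
    show "f ` {0..<5} \<subseteq> V" unfolding five f_def using in_V by auto
    show "\<forall>i<5. \<forall>j<5. E (f i) (f j) = chair_adj i j"
      unfolding all_less_5_iff f_def chair_adj_def
      using assms sym irr by (simp add: doubleton_eq_iff) (metis sym)
  qed
qed

lemma chair_free_adjacency_constant_on_edge:
  assumes sg: "simple_graph V E" and chair_free: "\<not> has_induced V E 5 chair_adj"
    and "a \<in> V" "b \<in> V" "u \<in> V" "x \<in> V" "y \<in> V"
    and "a \<noteq> b" "\<not> E a b" "E u a" "E u b"
    and "\<not> E x a" "\<not> E x b" "\<not> E y a" "\<not> E y b"
    and "E x y"
  shows "E u x \<longleftrightarrow> E u y"
proof -
  have "E y x" using sg \<open>E x y\<close> unfolding simple_graph_def by blast
  show ?thesis
  proof (intro iffI; rule ccontr)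
    assume "E u x" "\<not> E u y"
    with induced_chairI[OF sg assms(3-15)] \<open>E x y\<close> chair_free show False by blast
  next
    assume "E u y" "\<not> E u x"
    with induced_chairI[OF sg assms(3,4,5,7,6,8-11,14,15,12,13)] \<open>E y x\<close> chair_free
    show False by blast
  qed
qed

lemma complete_or_anticomplete_to_component:
  assumes "K \<in> components_in E S"
    and edge_constant: "\<And>p q. p \<in> S \<Longrightarrow> q \<in> S \<Longrightarrow> E p q \<Longrightarrow> E u p \<longleftrightarrow> E u q"
  shows "complete_to E u K \<or> anticomplete_to E u K"
proof -
  obtain x where K: "K = {y. (\<lambda>p q. p \<in> S \<and> q \<in> S \<and> E p q)\<^sup>*\<^sup>* x y}"
    using assms(1) unfolding components_in_def by blast
  have "E u y \<longleftrightarrow> E u x" if "y \<in> K" for y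
    using that unfolding K mem_Collect_eq by (induction rule: rtranclp_induct) (use edge_constant in auto)
  then show ?thesis
    unfolding complete_to_def anticomplete_to_def by blast
qed

lemmas nat_add_mod_cancel_left =
  cong_add_lcancel_nat[unfolded cong_def] cong_add_lcancel_0_nat[unfolded cong_def]

lemma cv_in_cyc_set: "cv v k \<in> cyc_set v"
  unfolding cv_def cyc_set_def by auto

lemma induced_C5_cv_in_V: "induced_C5 V E v \<Longrightarrow> cv v k \<in> V"
  unfolding induced_C5_def cv_def by auto

lemma induced_C5_cv_eq_iff:
  "induced_C5 V E v \<Longrightarrow> cv v k = cv v l \<longleftrightarrow> k mod 5 = l mod 5"
  unfolding induced_C5_def cv_def inj_on_def by auto

lemma induced_C5_cv_adj_iff:
  assumes "induced_C5 V E v"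
  shows "E (cv v k) (cv v l) \<longleftrightarrow> l mod 5 = (k + 1) mod 5 \<or> k mod 5 = (l + 1) mod 5"
proof -
  have "E (v (k mod 5)) (v (l mod 5)) \<longleftrightarrow>
      l mod 5 = (k mod 5 + 1) mod 5 \<or> k mod 5 = (l mod 5 + 1) mod 5"
    using assms unfolding induced_C5_def by (meson mod_less_divisor zero_less_numeral)
  then show ?thesis unfolding cv_def mod_add_left_eq .
qed

lemma S4_S5_adjacent_neighbours:
  "u \<in> S4 V E v i \<union> S5 V E v \<Longrightarrow> E u (cv v (i + 1)) \<and> E u (cv v (i + 4))"
  using cv_in_cyc_set unfolding S4_def S5_def N_C_def by blast

lemma S23_nonadjacent_neighbours:
  assumes "induced_C5 V E v" "x \<in> S23 V E v i"
  shows "\<not> E x (cv v (i + 1)) \<and> \<not> E x (cv v (i + 4))"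
proof -
  have N: "N_C E v x = {cv v (i + 3), cv v i, cv v (i + 2)}"
    using assms(2) unfolding S23_def by auto
  have "cv v (i + 1) \<notin> N_C E v x" "cv v (i + 4) \<notin> N_C E v x"
    unfolding N insert_iff induced_C5_cv_eq_iff[OF assms(1)] nat_add_mod_cancel_left by simp_all
  then show ?thesis
    unfolding N_C_def using cv_in_cyc_set by blast
qed

theorem mainTheorem6:
  fixes V :: "'a set" and E :: "'a \<Rightarrow> 'a \<Rightarrow> bool" and v :: "nat \<Rightarrow> 'a"
  assumes "simple_graph V E"
    and "\<not> has_induced V E 5 P5_adj"
    and "\<not> has_induced V E 5 chair_adj"
    and "induced_C5 V E v"
  shows "\<forall>i<5. \<forall>u \<in> S4 V E v i \<union> S5 V E v. \<forall>K \<in> components_in E (S23 V E v i).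
           complete_to E u K \<or> anticomplete_to E u K"
proof (intro allI impI ballI)
  fix i u K assume u: "u \<in> S4 V E v i \<union> S5 V E v" and K: "K \<in> components_in E (S23 V E v i)"
  let ?a = "cv v (i + 1)" and ?b = "cv v (i + 4)"
  have ab: "?a \<noteq> ?b" "\<not> E ?a ?b"
    unfolding induced_C5_cv_eq_iff[OF assms(4)] induced_C5_cv_adj_iff[OF assms(4)] add.assoc
      nat_add_mod_cancel_left by simp_all
  have "u \<in> V" using u unfolding S4_def S5_def by blast
  have S23_V: "S23 V E v i \<subseteq> V" unfolding S23_def by blast
  have a_V: "?a \<in> V" and b_V: "?b \<in> V" using induced_C5_cv_in_V[OF assms(4)] by blast+
  have u_adj: "E u ?a" "E u ?b" using S4_S5_adjacent_neighbours[OF u] by blast+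
  show "complete_to E u K \<or> anticomplete_to E u K"
  proof (rule complete_or_anticomplete_to_component[OF K])
    fix p q assume p: "p \<in> S23 V E v i" and q: "q \<in> S23 V E v i" and "E p q"
    have p_nonadj: "\<not> E p ?a" "\<not> E p ?b" using S23_nonadjacent_neighbours[OF assms(4) p] by blast+
    have q_nonadj: "\<not> E q ?a" "\<not> E q ?b" using S23_nonadjacent_neighbours[OF assms(4) q] by blast+
    show "E u p \<longleftrightarrow> E u q"
      using chair_free_adjacency_constant_on_edge[OF assms(1,3) a_V b_V \<open>u \<in> V\<close>
          subsetD[OF S23_V p] subsetD[OF S23_V q] ab u_adj p_nonadj q_nonadj \<open>E p q\<close>] .
  qed
qed

end
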